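(* Let $g \colon \mathbb{R}^n \to \mathbb{R}^m$ ($m \le n$) be smooth, let $M = g^{-1}(0)$, and assume the Jacobian of $g$ has maximal rank at every point of $M$. Let $q_0, q_N \in M$. Consider the optimal control problem of extremising the cost functional \[ J(u,\lambda) = \int_0^1 \left( \tfrac{1}{2} \|u(t)\|^2 - g(q(t))^\top \lambda(t) \right) \mathrm{d} t \] over controls $(u,\lambda) \in \mathcal{C}^\infty([0,1],\mathbb{R}^n\times \mathbb{R}^m)$, where the associated state $q \in \mathcal{C}^\infty([0,1],\mathbb{R}^n)$ satisfies the state equation $\dot q = u$ with $q(0)=q_0$, $q(1)=q_N$. Then for any optimal control $(u,\lambda) \in \mathcal{C}^\infty([0,1],\mathbb{R}^n\times \mathbb{R}^m)$ with associated state trajectory $q$ there exists a costate trajectory $p\colon[0,1]\to\mathbb{R}^n$ such that \[ \dot{q}=u,\qquad \dot{p}=-g'(q)^\top \lambda, \] subject to the algebraic constraints $g(q)=0$, $p=u$, and the boundary conditions $q(0)=q_0$, $q(1)=q_N$.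
   Context: $\|\cdot\|$ is the Euclidean norm on $\mathbb{R}^n$, $g'(q)$ denotes the Jacobian matrix of $g$ at $q$ (an $m\times n$ matrix), and $^\top$ denotes transposition. *)

theory Defs
  imports "HOL-Analysis.Analysis"
begin

fun Ck_scalar :: "nat \<Rightarrow> (real^'n \<Rightarrow> real) \<Rightarrow> bool" where
  "Ck_scalar 0 f = continuous_on UNIV f"
| "Ck_scalar (Suc k) f = (continuous_on UNIV f \<and>
     (\<forall>i. \<exists>D. (\<forall>x. ((\<lambda>s. f (x + s *\<^sub>R axis i 1)) has_real_derivative D x) (at 0))
              \<and> Ck_scalar k D))"

definition smooth_map :: "(real^'n \<Rightarrow> real^'m) \<Rightarrow> bool" where
  "smooth_map g \<longleftrightarrow> (\<forall>k j. Ck_scalar k (\<lambda>x. g x $ j))"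

definition smooth_on_01 :: "(real \<Rightarrow> 'a::real_normed_vector) \<Rightarrow> bool" where
  "smooth_on_01 f \<longleftrightarrow> (\<exists>F::nat \<Rightarrow> real \<Rightarrow> 'a. (\<forall>t\<in>{0..1}. F 0 t = f t) \<and>
      (\<forall>k. \<forall>t\<in>{0..1}. (F k has_vector_derivative F (Suc k) t) (at t within {0..1})))"

definition jacobian :: "(real^'n \<Rightarrow> real^'m) \<Rightarrow> real^'n \<Rightarrow> real^'n^'m" where
  "jacobian g q = matrix (frechet_derivative g (at q))"

definition state :: "real^'n \<Rightarrow> (real \<Rightarrow> real^'n) \<Rightarrow> real \<Rightarrow> real^'n" where
  "state q0 u t = q0 + integral {0..t} u"

definition cost :: "(real^'n \<Rightarrow> real^'m) \<Rightarrow> real^'n \<Rightarrow> (real \<Rightarrow> real^'n) \<Rightarrow> (real \<Rightarrow> real^'m) \<Rightarrow> real" where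
  "cost g q0 u lam = integral {0..1}
     (\<lambda>t. (1/2) * (norm (u t))\<^sup>2 - g (state q0 u t) \<bullet> lam t)"

definition admissible :: "real^'n \<Rightarrow> real^'n \<Rightarrow> (real \<Rightarrow> real^'n) \<Rightarrow> (real \<Rightarrow> real^'m) \<Rightarrow> bool" where
  "admissible q0 qN u lam \<longleftrightarrow> smooth_on_01 u \<and> smooth_on_01 lam \<and> state q0 u 1 = qN"

text \<open>Optimal (extremal) control: a critical point of J among admissible controls, i.e. the first
  variation vanishes in every admissible direction (v, mu): smooth, with v preserving the endpoint.\<close>
definition optimal_control :: "(real^'n \<Rightarrow> real^'m) \<Rightarrow> real^'n \<Rightarrow> real^'n
     \<Rightarrow> (real \<Rightarrow> real^'n) \<Rightarrow> (real \<Rightarrow> real^'m) \<Rightarrow> bool" where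
  "optimal_control g q0 qN u lam \<longleftrightarrow> admissible q0 qN u lam \<and>
     (\<forall>v mu. smooth_on_01 v \<and> smooth_on_01 mu \<and> integral {0..1} v = 0 \<longrightarrow>
        ((\<lambda>e. cost g q0 (\<lambda>t. u t + e *\<^sub>R v t) (\<lambda>t. lam t + e *\<^sub>R mu t)) has_real_derivative 0) (at 0))"

end

theory Submission
  imports Defs
begin

text \<open>Varying \<open>\<lambda>\<close> in the direction
  \<open>p(t) e\<^sub>j\<close>, \<open>p\<close> a polynomial, shows that every component of \<open>g(q)\<close> is orthogonal to
  all polynomials, hence \<open>g(q) = 0\<close> by Weierstrass approximation. Varying \<open>u\<close> in the
  direction \<open>\<phi>(t) e\<^sub>i\<close> with \<open>\<integral>\<phi> = 0\<close> (so that the endpoint \<open>q(1)\<close> is unchanged) and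
  integrating by parts shows that \<open>u(t) + \<integral>\<^sub>0\<^sup>t g'(q)\<^sup>T \<lambda>\<close> is orthogonal to all
  mean-zero polynomials, hence constant (du Bois-Reymond); so \<open>p := u\<close> is a costate.\<close>

lemma polynomial_orthogonal_imp_zero:
  fixes h :: "real \<Rightarrow> real"
  assumes hc: "continuous_on {a..b} h"
    and orth: "\<And>p. real_polynomial_function p \<Longrightarrow> integral {a..b} (\<lambda>t. p t * h t) = 0"
    and "a < b" and t: "t \<in> {a..b}"
  shows "h t = 0"
proof -
  define C where "C = integral {a..b} (\<lambda>t. \<bar>h t\<bar>)"
  have C_nonneg: "C \<ge> 0"
    unfolding C_def
    by (rule integral_nonneg) (auto intro!: integrable_continuous_interval continuous_intros hc)
  have hh_integrable: "(\<lambda>t. h t * h t) integrable_on {a..b}"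
    by (intro integrable_continuous_interval continuous_intros hc)
  have hh_le: "integral {a..b} (\<lambda>t. h t * h t) \<le> e * C" if "e > 0" for e
  proof -
    obtain p where p: "real_polynomial_function p" "\<And>x. x \<in> {a..b} \<Longrightarrow> \<bar>h x - p x\<bar> < e"
      using Stone_Weierstrass_real_polynomial_function[OF compact_Icc hc \<open>e > 0\<close>] by blast
    have pc: "continuous_on {a..b} p"
      using p(1) continuous_on_polymonial_function real_polynomial_function_eq by blast
    have "integral {a..b} (\<lambda>t. h t * h t)
        = integral {a..b} (\<lambda>t. h t * (h t - p t)) + integral {a..b} (\<lambda>t. p t * h t)"
      by (subst integral_add[symmetric])
        (auto intro!: integrable_continuous_interval continuous_intros hc pc simp: algebra_simps)
    also have "\<dots> = integral {a..b} (\<lambda>t. h t * (h t - p t))"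
      using orth[OF p(1)] by simp
    also have "\<dots> \<le> integral {a..b} (\<lambda>t. e * \<bar>h t\<bar>)"
    proof (rule integral_le)
      fix t assume "t \<in> {a..b}"
      have "h t * (h t - p t) \<le> \<bar>h t\<bar> * \<bar>h t - p t\<bar>"
        by (metis abs_ge_self abs_mult)
      also have "\<dots> \<le> \<bar>h t\<bar> * e"
        using p(2)[OF \<open>t \<in> {a..b}\<close>] by (intro mult_left_mono) auto
      finally show "h t * (h t - p t) \<le> e * \<bar>h t\<bar>"
        by (simp add: mult.commute)
    qed (auto intro!: integrable_continuous_interval continuous_intros hc pc)
    finally show ?thesis
      by (simp add: C_def)
  qed
  have "integral {a..b} (\<lambda>t. h t * h t) \<le> 0"
  proof (rule field_le_epsilon[where y = 0, simplified])
    fix e :: real assume "e > 0"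
    with C_nonneg have "integral {a..b} (\<lambda>t. h t * h t) \<le> e / (C + 1) * C"
      by (intro hh_le) auto
    also have "\<dots> \<le> e"
      using C_nonneg \<open>e > 0\<close> by (simp add: field_simps)
    finally show "integral {a..b} (\<lambda>t. h t * h t) \<le> e" .
  qed
  moreover have "integral {a..b} (\<lambda>t. h t * h t) \<ge> 0"
    by (rule integral_nonneg[OF hh_integrable]) auto
  ultimately have "((\<lambda>t. h t * h t) has_integral 0) (cbox a b)"
    using hh_integrable by (metis box_real(2) antisym has_integral_integrable_integral)
  then have "h t * h t = 0"
    by (rule has_integral_0_cbox_imp_0[rotated 2])
      (use t hc \<open>a < b\<close> in \<open>auto intro!: continuous_intros simp: box_real\<close>)
  then show ?thesis
    by simp
qed

lemma polynomial_mean_zero_orthogonal_imp_constant: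
  fixes h :: "real \<Rightarrow> real"
  assumes hc: "continuous_on {a..b} h"
    and orth: "\<And>p. real_polynomial_function p \<Longrightarrow> integral {a..b} p = 0 \<Longrightarrow>
                 integral {a..b} (\<lambda>t. p t * h t) = 0"
  obtains c where "\<And>t. t \<in> {a..b} \<Longrightarrow> h t = c"
proof (cases "a < b")
  case False
  then have "t \<in> {a..b} \<Longrightarrow> t = a" for t
    by auto
  then show ?thesis
    using that by blast
next
  case True
  define c where "c = integral {a..b} h / (b - a)"
  have "h t - c = 0" if "t \<in> {a..b}" for t
  proof (rule polynomial_orthogonal_imp_zero[OF _ _ True that])
    show "continuous_on {a..b} (\<lambda>t. h t - c)"
      by (intro continuous_intros hc)
    fix p :: "real \<Rightarrow> real" assume p: "real_polynomial_function p"
    define m where "m = integral {a..b} p / (b - a)"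
    have pc: "continuous_on {a..b} p"
      using p continuous_on_polymonial_function real_polynomial_function_eq by blast
    have integrable: "p integrable_on {a..b}" "h integrable_on {a..b}"
      "(\<lambda>t. p t * h t) integrable_on {a..b}"
      by (auto intro!: integrable_continuous_interval continuous_intros hc pc)
    have "integral {a..b} (\<lambda>t. p t - m) = 0"
      using integrable True by (subst integral_diff) (auto simp: m_def)
    then have "integral {a..b} (\<lambda>t. (p t - m) * h t) = 0"
      using p by (intro orth) auto
    moreover have "integral {a..b} (\<lambda>t. (p t - m) * h t)
        = integral {a..b} (\<lambda>t. p t * h t) - m * integral {a..b} h"
      using integrable by (simp add: left_diff_distrib integral_diff integrable_on_mult_right)
    moreover have "integral {a..b} (\<lambda>t. p t * (h t - c))
        = integral {a..b} (\<lambda>t. p t * h t) - c * integral {a..b} p"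
      using integral_diff[OF integrable(3) integrable_on_mult_left[OF integrable(1)], of c]
      by (simp add: right_diff_distrib mult.commute)
    moreover have "m * integral {a..b} h = c * integral {a..b} p"
      by (simp add: m_def c_def)
    ultimately show "integral {a..b} (\<lambda>t. p t * (h t - c)) = 0"
      by simp
  qed
  then show ?thesis
    using that by auto
qed

lemma integral_mult_primitives:
  fixes f g :: "real \<Rightarrow> real"
  assumes fc: "continuous_on {a..b} f" and gc: "continuous_on {a..b} g" and "a \<le> b"
  shows "integral {a..b} (\<lambda>t. f t * integral {a..t} g + integral {a..t} f * g t)
       = integral {a..b} f * integral {a..b} g"
proof -
  have "((\<lambda>t. integral {a..t} f * integral {a..t} g) has_vector_derivative
          f t * integral {a..t} g + integral {a..t} f * g t) (at t within {a..b})"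
    if "t \<in> {a..b}" for t
    using has_vector_derivative_mult[OF integral_has_vector_derivative[OF fc that]
        integral_has_vector_derivative[OF gc that]]
    by (simp add: algebra_simps)
  from fundamental_theorem_of_calculus[OF \<open>a \<le> b\<close> this]
  show ?thesis
    by (simp add: integral_unique)
qed

lemma integral_mean_zero_mult_primitive:
  fixes \<phi> f w :: "real \<Rightarrow> real"
  assumes \<phi>c: "continuous_on {a..b} \<phi>" and fc: "continuous_on {a..b} f"
    and wc: "continuous_on {a..b} w" and "a \<le> b"
    and \<phi>_mean: "integral {a..b} \<phi> = 0"
    and "integral {a..b} (\<lambda>t. \<phi> t * f t - integral {a..t} \<phi> * w t) = 0"
  shows "integral {a..b} (\<lambda>t. \<phi> t * (f t + integral {a..t} w)) = 0"
proof -
  have "continuous_on {a..b} (\<lambda>t. integral {a..t} \<phi>)" "continuous_on {a..b} (\<lambda>t. integral {a..t} w)"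
    by (intro indefinite_integral_continuous_1 integrable_continuous_interval \<phi>c wc)+
  then have "integral {a..b} (\<lambda>t. \<phi> t * (f t + integral {a..t} w))
      = integral {a..b} (\<lambda>t. \<phi> t * f t - integral {a..t} \<phi> * w t)
        + integral {a..b} (\<lambda>t. \<phi> t * integral {a..t} w + integral {a..t} \<phi> * w t)"
    by (subst integral_add[symmetric])
      (auto intro!: integrable_continuous_interval continuous_intros \<phi>c fc wc simp: algebra_simps)
  with assms show ?thesis
    by (simp add: integral_mult_primitives)
qed

lemma integral_scaleR_const:
  assumes "f integrable_on S"
  shows "integral S (\<lambda>x. f x *\<^sub>R c) = integral S f *\<^sub>R c"
  using has_integral_scaleR_left[OF integrable_integral[OF assms]] by (rule integral_unique)

lemma smooth_on_01_imp_continuous_on: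
  assumes "smooth_on_01 f"
  shows "continuous_on {0..1} f"
proof -
  obtain F where F: "\<forall>t\<in>{0..1}. F 0 t = f t"
    "\<And>k t. t \<in> {0..1} \<Longrightarrow> (F k has_vector_derivative F (Suc k) t) (at t within {0..1})"
    using assms unfolding smooth_on_01_def by blast
  have "continuous_on {0..1} (F 0)"
    using F(2) has_vector_derivative_continuous continuous_on_eq_continuous_within by blast
  then show ?thesis
    using F(1) continuous_on_eq by blast
qed

lemma smooth_on_01_zero: "smooth_on_01 (\<lambda>t. 0)"
  unfolding smooth_on_01_def by (intro exI[of _ "\<lambda>k t. 0"]) auto

lemma smooth_on_01_polynomial_scaleR:
  fixes c :: "'a::real_normed_vector"
  assumes "real_polynomial_function p"
  shows "smooth_on_01 (\<lambda>t. p t *\<^sub>R c)"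
proof -
  define deriv_poly where "deriv_poly q = (SOME q'. real_polynomial_function q' \<and>
      (\<forall>x. (q has_real_derivative q' x) (at x)))" for q :: "real \<Rightarrow> real"
  have deriv_poly: "real_polynomial_function (deriv_poly q) \<and>
      (\<forall>x. (q has_real_derivative deriv_poly q x) (at x))" if "real_polynomial_function q" for q
    using has_real_derivative_polynomial_function[OF that] unfolding deriv_poly_def by (rule someI_ex)
  have polynomial: "real_polynomial_function ((deriv_poly ^^ k) p)" for k
    by (induction k) (auto simp: assms deriv_poly)
  show ?thesis
    unfolding smooth_on_01_def
  proof (intro exI[of _ "\<lambda>k t. (deriv_poly ^^ k) p t *\<^sub>R c"] conjI ballI allI)
    fix k t
    have "((deriv_poly ^^ k) p has_real_derivative (deriv_poly ^^ Suc k) p t) (at t)"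
      using deriv_poly[OF polynomial[of k]] by simp
    from has_vector_derivative_scaleR[OF this has_vector_derivative_const]
    show "((\<lambda>t. (deriv_poly ^^ k) p t *\<^sub>R c) has_vector_derivative
        (deriv_poly ^^ Suc k) p t *\<^sub>R c) (at t within {0..1})"
      using has_vector_derivative_at_within by fastforce
  qed simp
qed

lemma MVT_abs_bound:
  fixes f :: "real \<Rightarrow> real"
  assumes "\<And>s. (f has_real_derivative f' s) (at s)"
  obtains z where "\<bar>z\<bar> \<le> \<bar>t\<bar>" and "f t - f 0 = t * f' z"
proof (cases t "0::real" rule: linorder_cases)
  case less
  then obtain z where "t < z" "z < 0" "f 0 - f t = (0 - t) * f' z"
    using MVT2[of t 0 f f'] assms by blast
  then show ?thesis
    using that[of z] by (auto simp: algebra_simps)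
next
  case equal
  then show ?thesis
    using that[of 0] by auto
next
  case greater
  then obtain z where "0 < z" "z < t" "f t - f 0 = (t - 0) * f' z"
    using MVT2[of 0 t f f'] assms by blast
  then show ?thesis
    using that[of z] by auto
qed

lemma partial_derivative_shift:
  fixes f :: "real^'n \<Rightarrow> real"
  assumes "\<And>x. ((\<lambda>s. f (x + s *\<^sub>R axis i 1)) has_real_derivative D x) (at 0)"
  shows "((\<lambda>s. f (a + s *\<^sub>R axis i 1)) has_real_derivative D (a + s0 *\<^sub>R axis i 1)) (at s0)"
proof -
  have "((\<lambda>s. f (a + (s + s0) *\<^sub>R axis i 1)) has_real_derivative D (a + s0 *\<^sub>R axis i 1)) (at 0)"
    using assms[of "a + s0 *\<^sub>R axis i 1"] by (simp add: scaleR_add_left algebra_simps)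
  then show ?thesis
    using DERIV_shift[of "\<lambda>s. f (a + s *\<^sub>R axis i 1)" _ 0 s0] by simp
qed

lemma partial_increment_bound:
  fixes f :: "real^'n \<Rightarrow> real"
  assumes partial: "\<And>x. ((\<lambda>s. f (x + s *\<^sub>R axis k 1)) has_real_derivative D x) (at 0)"
    and bound: "\<And>s. \<bar>s\<bar> \<le> \<bar>t\<bar> \<Longrightarrow> \<bar>D (a + s *\<^sub>R axis k 1) - c\<bar> \<le> B"
  shows "\<bar>f (a + t *\<^sub>R axis k 1) - f a - t * c\<bar> \<le> \<bar>t\<bar> * B"
proof -
  obtain z where z: "\<bar>z\<bar> \<le> \<bar>t\<bar>"
    and mvt: "f (a + t *\<^sub>R axis k 1) - f (a + 0 *\<^sub>R axis k 1) = t * D (a + z *\<^sub>R axis k 1)"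
    by (rule MVT_abs_bound[OF partial_derivative_shift[OF partial]])
  have "\<bar>f (a + t *\<^sub>R axis k 1) - f a - t * c\<bar> = \<bar>t\<bar> * \<bar>D (a + z *\<^sub>R axis k 1) - c\<bar>"
    using mvt by (simp add: algebra_simps abs_mult[symmetric])
  also have "\<dots> \<le> \<bar>t\<bar> * B"
    using bound[OF z] by (simp add: mult_left_mono)
  finally show ?thesis .
qed

text \<open>Coordinates outside \<open>S\<close> are frozen; the induction adds one coordinate at a time,
  each controlled by the mean value theorem and the continuity of its partial derivative.\<close>

lemma has_derivative_partials_restricted:
  fixes f :: "real^'n \<Rightarrow> real"
  assumes partial: "\<And>i x. ((\<lambda>s. f (x + s *\<^sub>R axis i 1)) has_real_derivative D i x) (at 0)"
    and cont: "\<And>i. continuous_on UNIV (D i)"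
  shows "((\<lambda>h. f (x + (\<chi> i. if i \<in> S then h$i else 0))) has_derivative
           (\<lambda>h. \<Sum>i\<in>S. h$i * D i x)) (at 0)"
proof (induction S rule: infinite_finite_induct)
  case (infinite S)
  then show ?case
    by simp
next
  case empty
  have "(\<chi> i. 0) = (0::real^'n)"
    by (simp add: vec_eq_iff)
  then show ?case
    by simp
next
  case (insert k S)
  let ?P = "\<lambda>S h. (\<chi> i. if i \<in> S then h$i else 0) :: real^'n"
  let ?L = "\<lambda>S h. \<Sum>i\<in>S. h$i * D i x"
  have P0: "?P S 0 = 0" for S
    by (simp add: vec_eq_iff)
  have "bounded_linear (?L (insert k S))"
    by (intro bounded_linear_sum bounded_linear_compose[OF bounded_linear_mult_left]
        bounded_linear_vec_nth)
  moreover have "\<exists>d>0. \<forall>y. norm y < d \<longrightarrow>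
      \<bar>f (x + ?P (insert k S) y) - f x - ?L (insert k S) y\<bar> \<le> e * norm y" if "e > 0" for e
  proof -
    obtain d1 where "d1 > 0" and d1: "\<And>y. norm (y - 0) < d1 \<Longrightarrow>
        norm (f (x + ?P S y) - f (x + ?P S 0) - ?L S (y - 0)) \<le> e/2 * norm (y - 0)"
      using insert.IH[unfolded has_derivative_at_alt] \<open>e > 0\<close> by (meson half_gt_zero)
    obtain d2 where "d2 > 0" and d2: "\<And>z. dist z x < d2 \<Longrightarrow> \<bar>D k z - D k x\<bar> < e/2"
      using cont[of k] \<open>e > 0\<close> unfolding continuous_on_iff dist_real_def
      by (meson UNIV_I half_gt_zero)
    have "\<bar>f (x + ?P (insert k S) y) - f x - ?L (insert k S) y\<bar> \<le> e * norm y"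
      if y: "norm y < min d1 d2" for y
    proof -
      define a where "a = x + ?P S y"
      have "\<bar>D k (a + s *\<^sub>R axis k 1) - D k x\<bar> \<le> e/2" if "\<bar>s\<bar> \<le> \<bar>y$k\<bar>" for s
      proof -
        have "norm (a + s *\<^sub>R axis k 1 - x) \<le> norm y"
          using insert.hyps that by (intro norm_le_componentwise_cart) (auto simp: a_def axis_def)
        then show ?thesis
          using d2[of "a + s *\<^sub>R axis k 1"] y by (simp add: dist_norm)
      qed
      then have "\<bar>f (a + y$k *\<^sub>R axis k 1) - f a - y$k * D k x\<bar> \<le> \<bar>y$k\<bar> * (e/2)"
        by (rule partial_increment_bound[OF partial])
      also have "\<dots> \<le> e/2 * norm y"
        using component_le_norm_cart[of y k] \<open>e > 0\<close> by (simp add: mult.commute)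
      finally have "\<bar>f (a + y$k *\<^sub>R axis k 1) - f a - y$k * D k x\<bar> \<le> e/2 * norm y" .
      moreover have "\<bar>f a - f x - ?L S y\<bar> \<le> e/2 * norm y"
        using d1[of y] y by (simp add: a_def P0)
      moreover have "f (x + ?P (insert k S) y) - f x - ?L (insert k S) y
          = (f (a + y$k *\<^sub>R axis k 1) - f a - y$k * D k x) + (f a - f x - ?L S y)"
      proof -
        have "?P (insert k S) y = ?P S y + y$k *\<^sub>R axis k 1"
          using insert.hyps by (auto simp: vec_eq_iff axis_def)
        moreover have "?L (insert k S) y = y$k * D k x + ?L S y"
          using insert.hyps by simp
        ultimately show ?thesis
          by (simp add: a_def add.assoc)
      qed
      ultimately show ?thesis
        by linarith
    qed
    with \<open>d1 > 0\<close> \<open>d2 > 0\<close> show ?thesis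
      by (intro exI[of _ "min d1 d2"]) simp
  qed
  ultimately show ?case
    unfolding has_derivative_at_alt P0 diff_zero add_0_right real_norm_def by blast
qed

lemma continuous_partials_imp_has_derivative:
  fixes f :: "real^'n \<Rightarrow> real"
  assumes "\<And>i x. ((\<lambda>s. f (x + s *\<^sub>R axis i 1)) has_real_derivative D i x) (at 0)"
    and "\<And>i. continuous_on UNIV (D i)"
  shows "(f has_derivative (\<lambda>h. \<Sum>i\<in>UNIV. h$i * D i x)) (at x)"
proof -
  have "((\<lambda>h. f (x + h)) has_derivative (\<lambda>h. \<Sum>i\<in>UNIV. h$i * D i x)) (at (x - x))"
    using has_derivative_partials_restricted[OF assms, of x UNIV] by simp
  from has_derivative_compose[OF has_derivative_diff[OF has_derivative_ident has_derivative_const]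
      this]
  show ?thesis
    by simp
qed

lemma continuous_on_matrix_vector_mult [continuous_intros]:
  fixes A :: "'a::topological_space \<Rightarrow> real^'n^'m"
  assumes "continuous_on S A" and "continuous_on S x"
  shows "continuous_on S (\<lambda>z. A z *v x z)"
  unfolding matrix_vector_mult_def
  by (intro continuous_intros continuous_on_vec_lambda continuous_on_component assms)

lemma smooth_map_partial_derivatives:
  fixes g :: "real^'n \<Rightarrow> real^'m"
  assumes "smooth_map g"
  obtains D where "\<And>j i x. ((\<lambda>s. g (x + s *\<^sub>R axis i 1) $ j) has_real_derivative D j i x) (at 0)"
    and "\<And>j i. continuous_on UNIV (D j i)"
proof -
  have "\<forall>j i. \<exists>D. (\<forall>x. ((\<lambda>s. g (x + s *\<^sub>R axis i 1) $ j) has_real_derivative D x) (at 0))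
      \<and> continuous_on UNIV D"
  proof (intro allI)
    fix j i
    have "Ck_scalar 2 (\<lambda>x. g x $ j)"
      using assms unfolding smooth_map_def by blast
    then show "\<exists>D. (\<forall>x. ((\<lambda>s. g (x + s *\<^sub>R axis i 1) $ j) has_real_derivative D x) (at 0))
      \<and> continuous_on UNIV D"
      by (simp only: numeral_2_eq_2 Ck_scalar.simps) blast
  qed
  then show ?thesis
    using that by (simp only: choice_iff) blast
qed

lemma smooth_map_jacobian:
  fixes g :: "real^'n \<Rightarrow> real^'m"
  assumes "smooth_map g"
  shows smooth_map_has_derivative_jacobian: "(g has_derivative (\<lambda>h. jacobian g x *v h)) (at x)"
    and smooth_map_continuous_jacobian: "continuous_on UNIV (jacobian g)"
proof -
  obtain D
    where partial: "\<And>j i x. ((\<lambda>s. g (x + s *\<^sub>R axis i 1) $ j) has_real_derivative D j i x) (at 0)"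
    and cont: "\<And>j i. continuous_on UNIV (D j i)"
    using smooth_map_partial_derivatives[OF assms] by blast
  define L where "L x h = (\<chi> j. \<Sum>i\<in>UNIV. h$i * D j i x)" for x and h :: "real^'n"
  have L: "(g has_derivative L x) (at x)" for x
  proof -
    have "((\<lambda>y. g y $ j) has_derivative (\<lambda>h. \<Sum>i\<in>UNIV. h$i * D j i x)) (at x)" for j
      by (rule continuous_partials_imp_has_derivative[OF partial cont])
    then show ?thesis
      unfolding has_derivative_componentwise_within[of g "L x" x UNIV]
      by (auto simp: Basis_vec_def L_def inner_axis)
  qed
  have jacobian: "jacobian g x = matrix (L x)" for x
    unfolding jacobian_def using frechet_derivative_at[OF L] by simp
  have "(\<lambda>h. jacobian g x *v h) = L x"
    using matrix_vector_mul(3)[OF has_derivative_bounded_linear[OF L]] by (simp add: jacobian)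
  with L show "(g has_derivative (\<lambda>h. jacobian g x *v h)) (at x)"
    by simp
  have "jacobian g = (\<lambda>x. \<chi> j i. D j i x)"
    by (auto simp: jacobian matrix_def L_def axis_def vec_eq_iff if_distrib[where f="\<lambda>a. a * _"]
        cong: if_cong)
  then show "continuous_on UNIV (jacobian g)"
    by (simp add: continuous_on_vec_lambda cont)
qed

lemma state_has_vector_derivative:
  assumes "continuous_on {0..1} u" and "t \<in> {0..1}"
  shows "(state q0 u has_vector_derivative u t) (at t within {0..1})"
  unfolding state_def[abs_def]
  using has_vector_derivative_add[OF has_vector_derivative_const
      integral_has_vector_derivative[OF assms]] by simp

lemma continuous_on_state:
  assumes "continuous_on {0..1} u"
  shows "continuous_on {0..1} (state q0 u)"
  using state_has_vector_derivative[OF assms] has_vector_derivative_continuous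
    continuous_on_eq_continuous_within by blast

lemma state_perturbation:
  assumes "continuous_on {0..1} u" and "continuous_on {0..1} v" and "t \<in> {0..1}"
  shows "state q0 (\<lambda>s. u s + e *\<^sub>R v s) t = state q0 u t + e *\<^sub>R integral {0..t} v"
proof -
  have "{0..t} \<subseteq> {0..1}"
    using assms(3) by auto
  then have "u integrable_on {0..t}" and "v integrable_on {0..t}"
    using assms(1,2) by (meson integrable_continuous_interval continuous_on_subset)+
  then show ?thesis
    by (simp add: state_def integral_add integrable_cmul algebra_simps)
qed

definition constraint_force :: "(real^'n \<Rightarrow> real^'m) \<Rightarrow> real^'n \<Rightarrow> (real \<Rightarrow> real^'n)
    \<Rightarrow> (real \<Rightarrow> real^'m) \<Rightarrow> real \<Rightarrow> real^'n" where
  "constraint_force g q0 u lam t = transpose (jacobian g (state q0 u t)) *v lam t"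

lemma continuous_on_constraint_force:
  assumes "continuous_on UNIV (jacobian g)"
    and "continuous_on {0..1} u" and "continuous_on {0..1} lam"
  shows "continuous_on {0..1} (constraint_force g q0 u lam)"
proof -
  have "continuous_on {0..1} (\<lambda>t. transpose (jacobian g (state q0 u t)))"
    unfolding transpose_def
    by (intro continuous_on_vec_lambda continuous_on_component
        continuous_on_compose2[OF assms(1) continuous_on_state[OF assms(2)]]) auto
  then show ?thesis
    unfolding constraint_force_def[abs_def] by (intro continuous_intros assms(3))
qed

lemma cost_multiplier_variation:
  assumes "continuous_on UNIV g"
    and "continuous_on {0..1} u" and "continuous_on {0..1} lam" and "continuous_on {0..1} mu"
  shows "((\<lambda>e. cost g q0 u (\<lambda>t. lam t + e *\<^sub>R mu t)) has_real_derivative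
           - integral {0..1} (\<lambda>t. g (state q0 u t) \<bullet> mu t)) (at 0)"
proof -
  define A where "A t = (1/2) * (norm (u t))\<^sup>2 - g (state q0 u t) \<bullet> lam t" for t
  define B where "B t = g (state q0 u t) \<bullet> mu t" for t
  have gQ: "continuous_on {0..1} (\<lambda>t. g (state q0 u t))"
    using continuous_on_compose2[OF assms(1) continuous_on_state[OF assms(2)]] by auto
  have "A integrable_on {0..1}" "B integrable_on {0..1}"
    unfolding A_def B_def
    by (auto intro!: integrable_continuous_interval continuous_intros gQ assms)
  then have "cost g q0 u (\<lambda>t. lam t + e *\<^sub>R mu t) = integral {0..1} A - e * integral {0..1} B" for e
  proof -
    have "cost g q0 u (\<lambda>t. lam t + e *\<^sub>R mu t) = integral {0..1} (\<lambda>t. A t - e * B t)"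
      unfolding cost_def A_def B_def by (simp add: inner_add_right algebra_simps)
    with \<open>A integrable_on {0..1}\<close> \<open>B integrable_on {0..1}\<close> show ?thesis
      by (simp add: integral_diff integrable_on_mult_right)
  qed
  then show ?thesis
    by (auto intro!: derivative_eq_intros simp: B_def[abs_def])
qed

lemma has_real_derivative_inner_along_line:
  fixes g :: "real^'n \<Rightarrow> real^'m"
  assumes g': "\<And>x. (g has_derivative (\<lambda>h. jacobian g x *v h)) (at x)"
  shows "((\<lambda>e. g (a + e *\<^sub>R b) \<bullet> c) has_real_derivative (jacobian g (a + e *\<^sub>R b) *v b) \<bullet> c) (at e)"
proof -
  have "((\<lambda>e. a + e *\<^sub>R b) has_derivative (\<lambda>d. d *\<^sub>R b)) (at e)"
    by (auto intro!: derivative_eq_intros)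
  from has_derivative_inner_left[OF has_derivative_compose[OF this g'], of c]
  show ?thesis
    by (simp add: has_real_derivative_iff_has_vector_derivative has_vector_derivative_def
        matrix_vector_mult_scaleR)
qed

lemma cost_control_variation:
  fixes g :: "real^'n \<Rightarrow> real^'m"
  assumes g': "\<And>x. (g has_derivative (\<lambda>h. jacobian g x *v h)) (at x)"
    and J: "continuous_on UNIV (jacobian g)"
    and uc: "continuous_on {0..1} u" and lc: "continuous_on {0..1} lam"
    and vc: "continuous_on {0..1} v"
  shows "((\<lambda>e. cost g q0 (\<lambda>t. u t + e *\<^sub>R v t) lam) has_real_derivative
           integral {0..1} (\<lambda>t. u t \<bullet> v t - constraint_force g q0 u lam t \<bullet> integral {0..t} v)) (at 0)"
proof -
  define Q where "Q = state q0 u"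
  define V where "V t = integral {0..t} v" for t
  define f where "f e t = (u t \<bullet> u t + 2 * e * (u t \<bullet> v t) + e\<^sup>2 * (v t \<bullet> v t)) / 2
      - g (Q t + e *\<^sub>R V t) \<bullet> lam t" for e t
  define f' where "f' e t = u t \<bullet> v t + e * (v t \<bullet> v t)
      - (jacobian g (Q t + e *\<^sub>R V t) *v V t) \<bullet> lam t" for e t
  have Qc: "continuous_on {0..1} Q"
    unfolding Q_def by (rule continuous_on_state[OF uc])
  have Vc: "continuous_on {0..1} V"
    unfolding V_def by (intro indefinite_integral_continuous_1 integrable_continuous_interval vc)
  have gc: "continuous_on UNIV g"
    by (intro continuous_at_imp_continuous_on ballI has_derivative_continuous[OF g'])
  have "cost g q0 (\<lambda>t. u t + e *\<^sub>R v t) lam = integral (cbox 0 1) (f e)" for e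
    unfolding cost_def box_real(2)
  proof (rule integral_cong)
    fix t :: real assume "t \<in> {0..1}"
    have "(norm (u t + e *\<^sub>R v t))\<^sup>2 = u t \<bullet> u t + 2 * e * (u t \<bullet> v t) + e\<^sup>2 * (v t \<bullet> v t)"
      unfolding power2_norm_eq_inner
      by (simp add: inner_add_left inner_add_right inner_commute[of "v t" "u t"]
          power2_eq_square algebra_simps)
    with \<open>t \<in> {0..1}\<close>
    show "1/2 * (norm (u t + e *\<^sub>R v t))\<^sup>2
        - g (state q0 (\<lambda>t. u t + e *\<^sub>R v t) t) \<bullet> lam t = f e t"
      by (simp add: state_perturbation[OF uc vc] f_def Q_def V_def)
  qed
  moreover have "((\<lambda>e. integral (cbox 0 1) (f e)) has_field_derivative integral (cbox 0 1) (f' 0))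
      (at 0 within UNIV)"
  proof (rule leibniz_rule_field_derivative)
    fix e t :: real
    note has_real_derivative_inner_along_line[OF g', of "Q t" "V t" "lam t" e]
    then show "((\<lambda>e. f e t) has_field_derivative f' e t) (at e within UNIV)"
      unfolding f_def f'_def by (auto intro!: derivative_eq_intros simp: power2_eq_square)
  next
    fix e :: real
    have "continuous_on {0..1} (\<lambda>t. g (Q t + e *\<^sub>R V t))"
      by (intro continuous_on_compose2[OF gc] continuous_intros Qc Vc) auto
    then show "f e integrable_on cbox 0 1"
      unfolding f_def box_real(2)
      by (intro integrable_continuous_interval continuous_intros uc vc lc) auto
  next
    have lift: "continuous_on (UNIV \<times> {0..1}) (\<lambda>z. k (snd z))"
      if "continuous_on {0..1} k" for k :: "real \<Rightarrow> 'a::topological_space"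
      by (rule continuous_on_compose2[OF that continuous_on_snd]) auto
    have "continuous_on (UNIV \<times> {0..1}) (\<lambda>z. jacobian g (Q (snd z) + fst z *\<^sub>R V (snd z)))"
      by (intro continuous_on_compose2[OF J] continuous_intros lift Qc Vc) auto
    then have "continuous_on (UNIV \<times> {0..1}) (\<lambda>z. f' (fst z) (snd z))"
      unfolding f'_def by (intro continuous_intros lift uc vc lc Vc)
    then show "continuous_on (UNIV \<times> cbox 0 1) (\<lambda>(e, t). f' e t)"
      by (simp add: case_prod_beta)
  qed auto
  moreover have "f' 0 = (\<lambda>t. u t \<bullet> v t - constraint_force g q0 u lam t \<bullet> integral {0..t} v)"
    by (simp add: fun_eq_iff f'_def constraint_force_def Q_def V_def dot_lmul_matrix
        inner_commute[of _ "lam _"])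
  ultimately show ?thesis
    by (simp add: box_real(2))
qed

lemma optimal_control_imp_continuous:
  assumes "optimal_control g q0 qN u lam"
  shows "continuous_on {0..1} u" and "continuous_on {0..1} lam"
  using assms smooth_on_01_imp_continuous_on unfolding optimal_control_def admissible_def by blast+

lemma optimal_control_imp_constraint:
  fixes g :: "real^'n \<Rightarrow> real^'m"
  assumes opt: "optimal_control g q0 qN u lam" and gc: "continuous_on UNIV g" and "t \<in> {0..1}"
  shows "g (state q0 u t) = 0"
proof -
  note uc = optimal_control_imp_continuous(1)[OF opt]
    and lc = optimal_control_imp_continuous(2)[OF opt]
  have "g (state q0 u t) $ j = 0" for j
  proof (rule polynomial_orthogonal_imp_zero[OF _ _ zero_less_one \<open>t \<in> {0..1}\<close>])
    show "continuous_on {0..1} (\<lambda>t. g (state q0 u t) $ j)"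
      by (intro continuous_on_component continuous_on_compose2[OF gc continuous_on_state[OF uc]])
        auto
    fix p :: "real \<Rightarrow> real" assume "real_polynomial_function p"
    define mu where "mu t = p t *\<^sub>R (axis j 1 :: real^'m)" for t
    have "smooth_on_01 mu"
      unfolding mu_def by (rule smooth_on_01_polynomial_scaleR) fact
    with opt smooth_on_01_zero
    have "((\<lambda>e. cost g q0 u (\<lambda>t. lam t + e *\<^sub>R mu t)) has_real_derivative 0) (at 0)"
      unfolding optimal_control_def by (auto dest!: spec[of _ "\<lambda>t. 0"] spec[of _ mu])
    moreover have "((\<lambda>e. cost g q0 u (\<lambda>t. lam t + e *\<^sub>R mu t)) has_real_derivative
        - integral {0..1} (\<lambda>t. g (state q0 u t) \<bullet> mu t)) (at 0)"
      using cost_multiplier_variation[OF gc uc lc smooth_on_01_imp_continuous_on]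
        \<open>smooth_on_01 mu\<close> .
    ultimately have "integral {0..1} (\<lambda>t. g (state q0 u t) \<bullet> mu t) = 0"
      using DERIV_unique by fastforce
    then show "integral {0..1} (\<lambda>t. p t * g (state q0 u t) $ j) = 0"
      by (simp add: mu_def inner_axis mult.commute)
  qed
  then show ?thesis
    by (simp add: vec_eq_iff)
qed

lemma optimal_control_orthogonality:
  fixes g :: "real^'n \<Rightarrow> real^'m"
  assumes opt: "optimal_control g q0 qN u lam"
    and g': "\<And>x. (g has_derivative (\<lambda>h. jacobian g x *v h)) (at x)"
    and J: "continuous_on UNIV (jacobian g)"
    and \<phi>: "real_polynomial_function \<phi>" and \<phi>_mean: "integral {0..1} \<phi> = 0"
  shows "integral {0..1}
           (\<lambda>t. \<phi> t * (u t $ i + integral {0..t} (constraint_force g q0 u lam) $ i)) = 0"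
proof -
  note uc = optimal_control_imp_continuous(1)[OF opt]
    and lc = optimal_control_imp_continuous(2)[OF opt]
  define w where "w = constraint_force g q0 u lam"
  have wc: "continuous_on {0..1} w"
    unfolding w_def by (rule continuous_on_constraint_force[OF J uc lc])
  have \<phi>c: "continuous_on {0..1} \<phi>"
    using \<phi> continuous_on_polymonial_function real_polynomial_function_eq by blast
  have integrable: "\<phi> integrable_on {0..t}" "w integrable_on {0..t}" if "t \<in> {0..1}" for t
    using that by (auto intro!: integrable_continuous_interval intro: continuous_on_subset \<phi>c wc)
  define v where "v t = \<phi> t *\<^sub>R (axis i 1 :: real^'n)" for t
  have "smooth_on_01 v"
    unfolding v_def by (rule smooth_on_01_polynomial_scaleR[OF \<phi>])
  moreover have "integral {0..1} v = 0"
    unfolding v_def using integral_scaleR_const[OF integrable(1)[of 1]] \<phi>_mean by simp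
  ultimately have "((\<lambda>e. cost g q0 (\<lambda>t. u t + e *\<^sub>R v t) lam) has_real_derivative 0) (at 0)"
    using opt smooth_on_01_zero unfolding optimal_control_def by (auto dest!: spec[of _ v])
  with cost_control_variation[OF g' J uc lc smooth_on_01_imp_continuous_on[OF \<open>smooth_on_01 v\<close>]]
  have "integral {0..1} (\<lambda>t. u t \<bullet> v t - w t \<bullet> integral {0..t} v) = 0"
    unfolding w_def using DERIV_unique by blast
  moreover have "integral {0..1} (\<lambda>t. u t \<bullet> v t - w t \<bullet> integral {0..t} v)
      = integral {0..1} (\<lambda>t. \<phi> t * u t $ i - integral {0..t} \<phi> * w t $ i)"
    by (intro integral_cong)
      (simp add: v_def[abs_def] integral_scaleR_const[OF integrable(1)] inner_axis mult.commute)
  ultimately have "integral {0..1} (\<lambda>t. \<phi> t * (u t $ i + integral {0..t} (\<lambda>s. w s $ i))) = 0"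
    by (intro integral_mean_zero_mult_primitive \<phi>c \<phi>_mean continuous_on_component uc wc) auto
  moreover have "integral {0..1} (\<lambda>t. \<phi> t * (u t $ i + integral {0..t} w $ i))
      = integral {0..1} (\<lambda>t. \<phi> t * (u t $ i + integral {0..t} (\<lambda>s. w s $ i)))"
    by (intro integral_cong) (simp add: integrable(2))
  ultimately show ?thesis
    by (simp add: w_def)
qed

lemma optimal_control_imp_costate:
  fixes g :: "real^'n \<Rightarrow> real^'m"
  assumes opt: "optimal_control g q0 qN u lam"
    and g': "\<And>x. (g has_derivative (\<lambda>h. jacobian g x *v h)) (at x)"
    and J: "continuous_on UNIV (jacobian g)"
  obtains p where "\<And>t. t \<in> {0..1} \<Longrightarrow>
      (p has_vector_derivative - constraint_force g q0 u lam t) (at t within {0..1})"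
    and "\<And>t. t \<in> {0..1} \<Longrightarrow> p t = u t"
proof -
  note uc = optimal_control_imp_continuous(1)[OF opt]
    and lc = optimal_control_imp_continuous(2)[OF opt]
  define W where "W t = integral {0..t} (constraint_force g q0 u lam)" for t
  have wc: "continuous_on {0..1} (constraint_force g q0 u lam)"
    by (rule continuous_on_constraint_force[OF J uc lc])
  have "\<forall>i. \<exists>c. \<forall>t\<in>{0..1}. u t $ i + W t $ i = c"
  proof
    fix i
    have "continuous_on {0..1} (\<lambda>t. u t $ i + W t $ i)"
      unfolding W_def
      by (intro continuous_intros continuous_on_component indefinite_integral_continuous_1
          integrable_continuous_interval uc wc)
    then show "\<exists>c. \<forall>t\<in>{0..1}. u t $ i + W t $ i = c"
    proof (rule polynomial_mean_zero_orthogonal_imp_constant)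
      fix \<phi> :: "real \<Rightarrow> real"
      assume "real_polynomial_function \<phi>" and "integral {0..1} \<phi> = 0"
      then show "integral {0..1} (\<lambda>t. \<phi> t * (u t $ i + W t $ i)) = 0"
        unfolding W_def by (rule optimal_control_orthogonality[OF opt g' J])
    qed blast
  qed
  then obtain c where c: "\<And>i t. t \<in> {0..1} \<Longrightarrow> u t $ i + W t $ i = c i"
    by (simp only: choice_iff) blast
  show ?thesis
  proof
    fix t :: real assume "t \<in> {0..1}"
    show "((\<lambda>t. (\<chi> i. c i) - W t) has_vector_derivative - constraint_force g q0 u lam t)
        (at t within {0..1})"
      unfolding W_def[abs_def]
      using has_vector_derivative_diff[OF has_vector_derivative_const
          integral_has_vector_derivative[OF wc \<open>t \<in> {0..1}\<close>]] by simp
    show "(\<chi> i. c i) - W t = u t"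
      using c[OF \<open>t \<in> {0..1}\<close>] by (simp add: vec_eq_iff algebra_simps)
  qed
qed

theorem proposition1:
  fixes g :: "real^'n \<Rightarrow> real^'m"
    and q0 qN :: "real^'n"
    and u :: "real \<Rightarrow> real^'n" and lam :: "real \<Rightarrow> real^'m"
  assumes "CARD('m) \<le> CARD('n)"
    and "smooth_map g"
    and "\<forall>x. g x = 0 \<longrightarrow> rank (jacobian g x) = CARD('m)"
    and "g q0 = 0" and "g qN = 0"
    and "optimal_control g q0 qN u lam"
  shows "\<exists>p :: real \<Rightarrow> real^'n.
           (\<forall>t\<in>{0..1}.
              (state q0 u has_vector_derivative u t) (at t within {0..1}) \<and>
              (p has_vector_derivative - (transpose (jacobian g (state q0 u t)) *v lam t))
                 (at t within {0..1}) \<and>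
              g (state q0 u t) = 0 \<and> p t = u t) \<and>
           state q0 u 0 = q0 \<and> state q0 u 1 = qN"
proof -
  note opt = assms(6)
  have g': "(g has_derivative (\<lambda>h. jacobian g x *v h)) (at x)" for x
    by (rule smooth_map_has_derivative_jacobian[OF assms(2)])
  have "continuous_on UNIV g"
    by (intro continuous_at_imp_continuous_on ballI has_derivative_continuous[OF g'])
  then have "g (state q0 u t) = 0" if "t \<in> {0..1}" for t
    using optimal_control_imp_constraint[OF opt _ that] by blast
  moreover obtain p where "\<And>t. t \<in> {0..1} \<Longrightarrow>
      (p has_vector_derivative - constraint_force g q0 u lam t) (at t within {0..1})"
    and "\<And>t. t \<in> {0..1} \<Longrightarrow> p t = u t"
    using optimal_control_imp_costate[OF opt g' smooth_map_continuous_jacobian[OF assms(2)]]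
    by blast
  moreover have "state q0 u 1 = qN"
    using opt unfolding optimal_control_def admissible_def by blast
  ultimately show ?thesis
    using state_has_vector_derivative[OF optimal_control_imp_continuous(1)[OF opt]]
    by (intro exI[of _ p]) (auto simp: constraint_force_def state_def)
qed

end
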